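(* The map $W:\mathcal{Q}_+/\mathrm{SL}_2(\mathbb{Z})\to \{L,R\}^*_{\mathrm{prim}}/{\sim}$ given by \[ [Q]\mapsto W(Q)=L^{c_1}R^{c_2}\cdots L^{c_{2\ell-1}}R^{c_{2\ell}}, \] where $(c_1,\dots,c_{2\ell})$ is the periodic part of the continued fraction expansion $w_Q=[a_1,\dots,a_{2k},\overline{c_1,\dots,c_{2\ell}}]$ described below, is well-defined. Moreover, its image consists of all classes in $\{L,R\}^*_{\mathrm{prim}}/{\sim}$ except the classes of the two words $L$ and $R$ of length one.
   Context: $\mathcal{Q}$ is the set of integral binary quadratic forms $Q(x,y)=ax^2+bxy+cy^2$, with right action of $\mathrm{SL}_2(\mathbb{Z})$ given by $(Q\circ\gamma)(x,y)=Q(\alpha x+\beta y,\gamma x+\delta y)$ for $\gamma=\begin{pmatrix}\alpha&\beta\\ \gamma&\delta\end{pmatrix}$; $\mathcal{Q}_+$ is the set of $Q\in\mathcal{Q}$ whose discriminant $D=b^2-4ac$ is positive and not a perfect square (then $a\neq 0$). For $Q\in\mathcal{Q}_+$, $w_Q=\frac{-b+\sqrt{D}}{2a}$. Every real quadratic irrational has an eventually periodic regular continued fraction $[a_1,a_2,\dots]$ ($a_1\in\mathbb{Z}$, $a_j\in\mathbb{Z}_{>0}$ for $j\ge2$); write $w_Q=[a_1,\dots,a_{2k},\overline{c_1,\dots,c_{2\ell}}]$ with a pre-periodic part of even length $2k$ (chosen arbitrarily among valid choices) and "minimal even period" $2\ell$: if the minimal period $(c_1,\dots,c_m)$ has $m$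 even, $2\ell=m$; if $m$ is odd, the period is taken to be the doubled block $(c_1,\dots,c_m,c_1,\dots,c_m)$ and $2\ell=2m$. $\{L,R\}^*_{\mathrm{prim}}$ is the set of finite nonempty words over $\{L,R\}$ that are primitive (not a power $U^k$, $k\ge2$, of a shorter word), and $\sim$ is the equivalence relation of cyclic permutation; $L^c$ denotes $c$ consecutive copies of $L$. *)

theory Defs
  imports Complex_Main
begin

text \<open>Integral binary quadratic forms Q(x,y) = a x^2 + b x y + c y^2 as triples (a,b,c).\<close>
type_synonym qform = "int \<times> int \<times> int"

text \<open>Matrices (alpha, beta, gamma, delta) standing for [[alpha, beta],[gamma, delta]].\<close>
type_synonym mat2 = "int \<times> int \<times> int \<times> int"

definition SL2Z :: "mat2 set" where
  "SL2Z = {(al, be, ga, de). al * de - be * ga = 1}"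

definition qeval :: "qform \<Rightarrow> int \<Rightarrow> int \<Rightarrow> int" where
  "qeval Q x y = (case Q of (a, b, c) \<Rightarrow> a * x^2 + b * x * y + c * y^2)"

text \<open>Right action: (Q o g)(x,y) = Q(al x + be y, ga x + de y), expanded to coefficients.\<close>
definition qact :: "qform \<Rightarrow> mat2 \<Rightarrow> qform" where
  "qact Q g = (case Q of (a, b, c) \<Rightarrow> (case g of (al, be, ga, de) \<Rightarrow>
      (a * al^2 + b * al * ga + c * ga^2,
       2 * a * al * be + b * (al * de + be * ga) + 2 * c * ga * de,
       a * be^2 + b * be * de + c * de^2)))"

definition disc :: "qform \<Rightarrow> int" where
  "disc Q = (case Q of (a, b, c) \<Rightarrow> b^2 - 4 * a * c)"

definition Qplus :: "qform set" where
  "Qplus = {Q. disc Q > 0 \<and> \<not> (\<exists>n::int. disc Q = n^2)}"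

definition wQ :: "qform \<Rightarrow> real" where
  "wQ Q = (case Q of (a, b, c) \<Rightarrow> (- real_of_int b + sqrt (real_of_int (disc Q))) / (2 * real_of_int a))"

text \<open>Regular continued fraction: complete quotients and partial quotients.
  cf_digit x n is a_{n+1} in the notation [a_1, a_2, ...].\<close>
primrec cf_rem :: "real \<Rightarrow> nat \<Rightarrow> real" where
  "cf_rem x 0 = x"
| "cf_rem x (Suc n) = 1 / (cf_rem x n - of_int \<lfloor>cf_rem x n\<rfloor>)"

definition cf_digit :: "real \<Rightarrow> nat \<Rightarrow> int" where
  "cf_digit x n = \<lfloor>cf_rem x n\<rfloor>"

definition valid_preperiod :: "real \<Rightarrow> nat \<Rightarrow> bool" where
  "valid_preperiod x k \<longleftrightarrow> (\<exists>p>0. \<forall>j. cf_digit x (2*k + j + p) = cf_digit x (2*k + j))"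

definition min_period :: "real \<Rightarrow> nat \<Rightarrow> nat" where
  "min_period x k = (LEAST p. p > 0 \<and> (\<forall>j. cf_digit x (2*k + j + p) = cf_digit x (2*k + j)))"

definition even_period :: "real \<Rightarrow> nat \<Rightarrow> nat" where
  "even_period x k = (if even (min_period x k) then min_period x k else 2 * min_period x k)"

datatype letter = L | R

text \<open>W = L^{c_1} R^{c_2} ... L^{c_{2l-1}} R^{c_{2l}} with c_{i+1} = cf_digit x (2k + i).\<close>
definition Wword :: "qform \<Rightarrow> nat \<Rightarrow> letter list" where
  "Wword Q k = concat (map (\<lambda>i. replicate (nat (cf_digit (wQ Q) (2*k + i))) (if even i then L else R))
                           [0..<even_period (wQ Q) k])"

definition primitive_word :: "letter list \<Rightarrow> bool" where
  "primitive_word w \<longleftrightarrow> w \<noteq> [] \<and> \<not> (\<exists>u m. m \<ge> 2 \<and> w = concat (replicate m u))"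

definition cyc_equiv :: "'a list \<Rightarrow> 'a list \<Rightarrow> bool" where
  "cyc_equiv u v \<longleftrightarrow> (\<exists>n. rotate n u = v)"

end

theory Submission
  imports Defs "HOL-Computational_Algebra.Polynomial"
begin

text \<open>The complete quotients of \<open>w\<^sub>Q\<close> are the roots \<open>w\<^sub>Q\<^sub>n\<close> of forms \<open>Q\<^sub>n\<close> of the
  same discriminant. The conjugate roots of the \<open>Q\<^sub>n\<close> eventually become negative, since
  otherwise they would share all digits with the roots, whose distance to them grows
  geometrically; from then on the \<open>Q\<^sub>n\<close> are reduced, their coefficients are bounded by the
  discriminant, some form recurs and the expansion is periodic (Lagrange). Reading the digits
  of a least even period as exponents of alternating letters gives a primitive word, because a
  proper power would come from a shorter even period. \<open>SL\<^sub>2(\<int>)\<close>-equivalent numbers have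
  expansions whose tails agree after index shifts of equal parity (Serret), so their words are
  rotations of each other. Conversely, a primitive word other than \<open>L\<close>, \<open>R\<close> is a rotation of
  \<open>L\<^bsup>c\<^sub>1\<^esup> R\<^bsup>c\<^sub>2\<^esup> \<dots> R\<^bsup>c\<^sub>2\<^sub>l\<^esup>\<close>; the purely periodic continued fraction with period
  \<open>c\<^sub>1, \<dots>, c\<^sub>2\<^sub>l\<close> is the fixed point of a matrix of determinant 1 and trace \<open>t \<ge> 3\<close>, hence
  a root of a form of non-square discriminant \<open>t\<^sup>2 - 4\<close>.\<close>

section \<open>Roots of indefinite forms\<close>

lemma Qplus_fst_nonzero: "(a, b, c) \<in> Qplus \<Longrightarrow> a \<noteq> 0"
  by (auto simp: Qplus_def disc_def)

lemma sqrt_nonsquare_irrational: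
  assumes "0 \<le> D" "\<And>n. D \<noteq> n\<^sup>2"
  shows "sqrt (of_int D) \<notin> \<rat>"
proof
  assume "sqrt (of_int D) \<in> \<rat>"
  moreover have "algebraic_int (sqrt (of_int D))"
    by (intro algebraic_int_sqrt int_imp_algebraic_int) auto
  ultimately have "sqrt (of_int D) \<in> \<int>"
    using rational_algebraic_int_is_int by blast
  then obtain n where "sqrt (of_int D) = of_int n"
    by (auto elim: Ints_cases)
  then have "D = n\<^sup>2"
    by (metis assms(1) of_int_0_le_iff of_int_eq_of_int_power_cancel_iff real_sqrt_pow2)
  with assms(2) show False by blast
qed

definition wQ_conj :: "qform \<Rightarrow> real" where
  "wQ_conj Q = (case Q of (a, b, c) \<Rightarrow> (- of_int b - sqrt (of_int (disc Q))) / (2 * of_int a))"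

lemma Qplus_roots:
  assumes "(a, b, c) \<in> Qplus"
  defines "s \<equiv> sqrt (of_int (disc (a, b, c)))"
  shows "0 < s" "s\<^sup>2 = (of_int b)\<^sup>2 - 4 * of_int a * of_int c"
    and "2 * of_int a * wQ (a, b, c) + of_int b = s"
    and "2 * of_int a * wQ_conj (a, b, c) + of_int b = - s"
proof -
  have D: "0 < disc (a, b, c)" and "a \<noteq> 0"
    using assms(1) by (auto simp: Qplus_def Qplus_fst_nonzero)
  then show "0 < s" "2 * of_int a * wQ (a, b, c) + of_int b = s"
    "2 * of_int a * wQ_conj (a, b, c) + of_int b = - s"
    by (simp_all add: s_def wQ_def wQ_conj_def)
  have "s\<^sup>2 = of_int (disc (a, b, c))"
    using D by (simp add: s_def abs_of_pos)
  also have "\<dots> = (of_int b)\<^sup>2 - 4 * of_int a * of_int c"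
    by (simp add: disc_def)
  finally show "s\<^sup>2 = (of_int b)\<^sup>2 - 4 * of_int a * of_int c" .
qed

lemma wQ_times_wQ_conj:
  assumes "(a, b, c) \<in> Qplus"
  shows "of_int a * (wQ (a, b, c) * wQ_conj (a, b, c)) = of_int c"
proof -
  note r = Qplus_roots[OF assms]
  define w w' where "w = wQ (a, b, c)" and "w' = wQ_conj (a, b, c)"
  define P P' where "P = 2 * of_int a * w + of_int b" and "P' = 2 * of_int a * w' + of_int b"
  have "P * P' = 4 * of_int a * (of_int a * (w * w')) + of_int b * (P + P') - (of_int b)\<^sup>2"
    by (simp add: P_def P'_def algebra_simps power2_eq_square)
  moreover have "P + P' = 0" "P * P' = - ((of_int b)\<^sup>2 - 4 * of_int a * of_int c)"
    using r(2-4) by (simp_all add: P_def P'_def w_def w'_def power2_eq_square)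
  ultimately show ?thesis
    using Qplus_fst_nonzero[OF assms] by (auto simp: w_def w'_def)
qed

lemma wQ_irrational:
  assumes "Q \<in> Qplus"
  shows "wQ Q \<notin> \<rat>" "wQ_conj Q \<notin> \<rat>"
proof -
  obtain a b c where Q: "Q = (a, b, c)"
    by (cases Q)
  let ?s = "sqrt (of_int (disc (a, b, c)))"
  have irr: "?s \<notin> \<rat>"
    using assms by (intro sqrt_nonsquare_irrational) (auto simp: Q Qplus_def)
  have lin: "2 * of_int a * w + of_int b \<in> \<rat>" if "w \<in> \<rat>" for w :: real
    using that by (intro Rats_add Rats_mult) auto
  show "wQ Q \<notin> \<rat>"
    using lin[of "wQ Q"] irr Qplus_roots(3)[OF assms[unfolded Q]] by (auto simp: Q)
  show "wQ_conj Q \<notin> \<rat>"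
    using lin[of "wQ_conj Q"] irr Qplus_roots(4)[OF assms[unfolded Q]] by (auto simp: Q)
qed

lemma wQ_ne_wQ_conj: "Q \<in> Qplus \<Longrightarrow> wQ Q \<noteq> wQ_conj Q"
  using Qplus_roots(1,3,4) by (cases Q) fastforce

lemma wQ_root:
  assumes "(a, b, c) \<in> Qplus"
  shows "of_int a * (wQ (a, b, c))\<^sup>2 + of_int b * wQ (a, b, c) + of_int c = 0"
proof -
  let ?w = "wQ (a, b, c)"
  have "4 * of_int a * (of_int a * ?w\<^sup>2 + of_int b * ?w + of_int c)
      = (2 * of_int a * ?w + of_int b)\<^sup>2 - ((of_int b)\<^sup>2 - 4 * of_int a * of_int c)"
    by (simp add: power2_eq_square algebra_simps)
  then show ?thesis
    using Qplus_roots(2,3)[OF assms] Qplus_fst_nonzero[OF assms] by simp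
qed

lemma Qplus_signs_of_roots:
  assumes "(a, b, c) \<in> Qplus" "wQ_conj (a, b, c) < 0" "0 < wQ (a, b, c)"
  shows "0 < a" "c < 0"
proof -
  note r = Qplus_roots[OF assms(1)]
  have "2 * (of_int a * (wQ (a, b, c) - wQ_conj (a, b, c))) = 2 * sqrt (of_int (disc (a, b, c)))"
    using r(3,4) by (simp add: algebra_simps)
  with r(1) have "0 < of_int a * (wQ (a, b, c) - wQ_conj (a, b, c))"
    by simp
  then have "(0::real) < of_int a"
    using assms(2,3) by (simp add: zero_less_mult_iff)
  then show "0 < a"
    by simp
  have "wQ (a, b, c) * wQ_conj (a, b, c) < 0"
    using assms(2,3) by (simp add: mult_pos_neg)
  with \<open>0 < a\<close> have "of_int a * (wQ (a, b, c) * wQ_conj (a, b, c)) < 0"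
    by (simp add: mult_pos_neg)
  then show "c < 0"
    using wQ_times_wQ_conj[OF assms(1)] by simp
qed

text \<open>The form \<open>-y\<^sup>2 Q(n + 1/y)\<close>; the sign makes its root \<open>w\<^sub>Q\<close> (rather than the conjugate one)
  equal to \<open>1 / (w\<^sub>Q - n)\<close>.\<close>
definition cf_step_form :: "int \<Rightarrow> qform \<Rightarrow> qform" where
  "cf_step_form n Q = (case Q of (a, b, c) \<Rightarrow> (- (a*n\<^sup>2 + b*n + c), - (2*a*n + b), - a))"

lemma disc_cf_step_form: "disc (cf_step_form n Q) = disc Q"
  by (cases Q) (simp add: cf_step_form_def disc_def power2_eq_square algebra_simps)

lemma cf_step_form_Qplus: "Q \<in> Qplus \<Longrightarrow> cf_step_form n Q \<in> Qplus"
  by (simp add: Qplus_def disc_cf_step_form)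

lemma wQ_cf_step_form:
  assumes "Q \<in> Qplus"
  shows "wQ (cf_step_form n Q) = 1 / (wQ Q - of_int n)"
    and "wQ_conj (cf_step_form n Q) = 1 / (wQ_conj Q - of_int n)"
proof -
  obtain a b c where Q: "Q = (a, b, c)"
    by (cases Q)
  define k e where "k = a*n\<^sup>2 + b*n + c" and "e = 2*a*n + b"
  have step: "cf_step_form n Q = (- k, - e, - a)"
    by (simp add: Q cf_step_form_def k_def e_def)
  have Q': "(- k, - e, - a) \<in> Qplus"
    using cf_step_form_Qplus[OF assms, of n] by (simp add: step)
  have "disc (- k, - e, - a) = disc (a, b, c)"
    using disc_cf_step_form[of n Q] unfolding step by (simp add: Q)
  note r = Qplus_roots[OF assms[unfolded Q]] and r' = Qplus_roots[OF Q', unfolded this]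
  define s where "s = sqrt (of_int (disc (a, b, c)))"
  have ak: "of_int a \<noteq> (0::real)" "of_int k \<noteq> (0::real)"
    using Qplus_fst_nonzero[OF assms[unfolded Q]] Qplus_fst_nonzero[OF Q'] by auto
  have recip: "v = 1 / u"
    if "2 * of_int a * u = t - of_int e" "- 2 * of_int k * v = t + of_int e"
      and "t\<^sup>2 = s\<^sup>2" for u v t :: real
  proof -
    have "- 4 * of_int a * of_int k * (u * v) = (t - of_int e) * (t + of_int e)"
      unfolding that(1,2)[symmetric] by (simp add: algebra_simps)
    also have "\<dots> = - 4 * of_int a * of_int k"
      using r(2) that(3) by (simp add: s_def k_def e_def algebra_simps power2_eq_square)
    finally have "u * v = 1"
      using ak by simp
    then show ?thesis
      by (metis inverse_eq_divide inverse_unique)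
  qed
  have w: "2 * of_int a * (wQ Q - of_int n) = s - of_int e"
    "2 * of_int a * (wQ_conj Q - of_int n) = - s - of_int e"
    using r(3,4) by (simp_all add: Q s_def e_def algebra_simps)
  have w': "- 2 * of_int k * wQ (cf_step_form n Q) = s + of_int e"
    "- 2 * of_int k * wQ_conj (cf_step_form n Q) = - s + of_int e"
    using r'(3,4) by (simp_all add: step s_def algebra_simps)
  show "wQ (cf_step_form n Q) = 1 / (wQ Q - of_int n)"
    by (rule recip[where t = s]) (use w w' in simp_all)
  show "wQ_conj (cf_step_form n Q) = 1 / (wQ_conj Q - of_int n)"
    by (rule recip[where t = "- s"]) (use w w' in simp_all)
qed

section \<open>Continued fractions of irrationals\<close>

declare cf_rem.simps(2) [simp del]

lemma cf_rem_Suc: "cf_rem x (Suc n) = 1 / (cf_rem x n - of_int (cf_digit x n))"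
  by (simp add: cf_rem.simps(2) cf_digit_def)

lemma cf_rem_add: "cf_rem x (m + n) = cf_rem (cf_rem x m) n"
  by (induction n) (auto simp: cf_rem.simps(2))

lemma cf_rem_irrational: "x \<notin> \<rat> \<Longrightarrow> cf_rem x n \<notin> \<rat>"
proof (induction n)
  case (Suc n)
  then have "cf_rem x n - of_int (cf_digit x n) \<notin> \<rat>"
    by (metis Rats_add Rats_of_int diff_add_cancel)
  then show ?case
    by (metis Rats_inverse cf_rem_Suc inverse_eq_divide inverse_inverse_eq)
qed simp

lemma frac_part_irrational:
  assumes "x \<notin> \<rat>"
  shows "0 < x - of_int \<lfloor>x\<rfloor>" "x - of_int \<lfloor>x\<rfloor> < 1"
proof -
  have "x \<noteq> of_int \<lfloor>x\<rfloor>"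
    using assms by (metis Rats_of_int)
  then show "0 < x - of_int \<lfloor>x\<rfloor>"
    using of_int_floor_le[of x] by linarith
  show "x - of_int \<lfloor>x\<rfloor> < 1"
    by linarith
qed

lemma cf_rem_Suc_gt_1: "x \<notin> \<rat> \<Longrightarrow> 1 < cf_rem x (Suc n)"
  using frac_part_irrational[OF cf_rem_irrational, of x n] by (simp add: cf_rem_Suc cf_digit_def)

lemma cf_digit_Suc_ge_1: "x \<notin> \<rat> \<Longrightarrow> 1 \<le> cf_digit x (Suc n)"
  using cf_rem_Suc_gt_1 by (simp add: cf_digit_def le_floor_iff less_imp_le)

lemma cf_rem_two_steps_gt_2:
  assumes "x \<notin> \<rat>"
  shows "2 < cf_rem x (Suc n) * cf_rem x (Suc (Suc n))"
proof -
  define u v where "u = cf_rem x (Suc n)" and "v = cf_rem x (Suc (Suc n))"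
  define d :: real where "d = of_int (cf_digit x (Suc n))"
  have "1 < v" "1 \<le> d"
    using cf_rem_Suc_gt_1 cf_digit_Suc_ge_1 assms by (auto simp: v_def d_def)
  have "u - d \<noteq> 0"
    using frac_part_irrational(1)[OF cf_rem_irrational[OF assms], of "Suc n"]
    by (simp add: u_def d_def cf_digit_def)
  then have "u * v = d * v + 1"
    by (simp add: u_def v_def d_def cf_rem_Suc field_simps)
  moreover have "v \<le> d * v"
    using mult_right_mono[of 1 d v] \<open>1 < v\<close> \<open>1 \<le> d\<close> by simp
  ultimately have "2 < u * v"
    using \<open>1 < v\<close> by linarith
  then show ?thesis
    by (simp add: u_def v_def)
qed

text \<open>Two irrationals with the same digits have complete quotients whose distance stays
  below 1, yet grows at least by the factor 4 every two steps.\<close>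
lemma cf_digit_inj:
  assumes x: "x \<notin> \<rat>" and y: "y \<notin> \<rat>" and same: "\<And>n. cf_digit x n = cf_digit y n"
  shows "x = y"
proof -
  define \<delta> where "\<delta> n = \<bar>cf_rem x n - cf_rem y n\<bar>" for n
  have \<delta>_lt_1: "\<delta> n < 1" for n
    using same[of n] by (simp add: \<delta>_def cf_digit_def) linarith
  have \<delta>_Suc: "\<delta> (Suc n) = \<delta> n * (cf_rem x (Suc n) * cf_rem y (Suc n))" for n
  proof -
    define p q where "p = cf_rem x n - of_int (cf_digit x n)" and "q = cf_rem y n - of_int (cf_digit x n)"
    have "p \<noteq> 0" "q \<noteq> 0"
      using frac_part_irrational(1)[OF cf_rem_irrational[OF x], of n]
        frac_part_irrational(1)[OF cf_rem_irrational[OF y], of n] same[of n]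
      by (auto simp: p_def q_def cf_digit_def)
    moreover have X: "cf_rem x (Suc n) = 1 / p" and Y: "cf_rem y (Suc n) = 1 / q"
      using same[of n] by (simp_all add: p_def q_def cf_rem_Suc)
    ultimately have "cf_rem x (Suc n) - cf_rem y (Suc n) = (q - p) * (cf_rem x (Suc n) * cf_rem y (Suc n))"
      unfolding X Y by (simp add: field_simps)
    moreover have "0 < cf_rem x (Suc n) * cf_rem y (Suc n)"
      using cf_rem_Suc_gt_1[OF x, of n] cf_rem_Suc_gt_1[OF y, of n] by simp
    moreover have "\<delta> n = \<bar>q - p\<bar>"
      by (simp add: \<delta>_def p_def q_def abs_minus_commute)
    ultimately show ?thesis
      unfolding \<delta>_def by (metis abs_mult abs_of_pos)
  qed
  have grow: "4 * \<delta> n \<le> \<delta> (Suc (Suc n))" for n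
  proof -
    define K where "K = (cf_rem x (Suc n) * cf_rem x (Suc (Suc n))) * (cf_rem y (Suc n) * cf_rem y (Suc (Suc n)))"
    have "2 * 2 < K"
      using cf_rem_two_steps_gt_2[OF x, of n] cf_rem_two_steps_gt_2[OF y, of n]
      unfolding K_def by (intro mult_strict_mono) auto
    moreover have "\<delta> (Suc (Suc n)) = K * \<delta> n"
      unfolding \<delta>_Suc K_def by (simp add: mult_ac)
    moreover have "0 \<le> \<delta> n"
      by (simp add: \<delta>_def)
    ultimately show ?thesis
      using mult_right_mono[of 4 K "\<delta> n"] by linarith
  qed
  have "4 ^ m * \<delta> 0 \<le> \<delta> (2 * m)" for m
  proof (induction m)
    case (Suc m)
    then show ?case
      using grow[of "2 * m"] by simp
  qed simp
  then have small: "4 ^ m * \<delta> 0 < 1" for m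
    using \<delta>_lt_1 le_less_trans by blast
  have "\<delta> 0 = 0"
  proof (rule ccontr)
    assume "\<delta> 0 \<noteq> 0"
    then have "0 < \<delta> 0"
      by (simp add: \<delta>_def)
    obtain m where "1 / \<delta> 0 < 4 ^ m"
      using real_arch_pow[of 4 "1 / \<delta> 0"] by auto
    with \<open>0 < \<delta> 0\<close> small[of m] show False
      by (simp add: divide_less_eq)
  qed
  then show ?thesis
    by (simp add: \<delta>_def)
qed

section \<open>Lagrange's theorem\<close>

primrec cf_forms :: "qform \<Rightarrow> nat \<Rightarrow> qform" where
  "cf_forms Q 0 = Q"
| "cf_forms Q (Suc n) = cf_step_form \<lfloor>wQ (cf_forms Q n)\<rfloor> (cf_forms Q n)"

declare cf_forms.simps(2) [simp del]

lemma cf_forms_Qplus: "Q \<in> Qplus \<Longrightarrow> cf_forms Q n \<in> Qplus"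
  by (induction n) (auto simp: cf_forms.simps(2) cf_step_form_Qplus)

lemma disc_cf_forms: "disc (cf_forms Q n) = disc Q"
  by (induction n) (auto simp: cf_forms.simps(2) disc_cf_step_form)

lemma cf_rem_wQ: "Q \<in> Qplus \<Longrightarrow> cf_rem (wQ Q) n = wQ (cf_forms Q n)"
  by (induction n) (auto simp: cf_forms.simps(2) cf_rem_Suc cf_digit_def wQ_cf_step_form cf_forms_Qplus)

lemma wQ_conj_cf_forms_Suc:
  "Q \<in> Qplus \<Longrightarrow> wQ_conj (cf_forms Q (Suc n)) = 1 / (wQ_conj (cf_forms Q n) - of_int (cf_digit (wQ Q) n))"
  by (simp add: cf_forms.simps(2) wQ_cf_step_form cf_forms_Qplus cf_rem_wQ cf_digit_def)

text \<open>Otherwise the conjugates would have the same digits as the roots from index 1 on.\<close>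
lemma wQ_conj_cf_forms_eventually_negative:
  assumes Q: "Q \<in> Qplus"
  shows "\<exists>N\<ge>1. wQ_conj (cf_forms Q N) < 0"
proof (rule ccontr)
  let ?y = "\<lambda>n. wQ_conj (cf_forms Q n)" and ?d = "\<lambda>n. cf_digit (wQ Q) n"
  assume "\<not> ?thesis"
  then have "0 \<le> ?y n" if "1 \<le> n" for n
    using that by auto
  moreover have "?y n \<noteq> 0" for n
    using wQ_irrational(2)[OF cf_forms_Qplus[OF Q], of n] by auto
  ultimately have pos: "0 < ?y n" if "1 \<le> n" for n
    using that by (simp add: order_less_le)
  have above: "of_int (?d n) < ?y n" if "1 \<le> n" for n
    using pos[of "Suc n"] that by (simp add: wQ_conj_cf_forms_Suc[OF Q])
  have floor_y: "\<lfloor>?y n\<rfloor> = ?d n" if "1 \<le> n" for n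
  proof -
    have "1 \<le> ?d (Suc n)"
      using cf_digit_Suc_ge_1[OF wQ_irrational(1)[OF Q]] .
    then have "1 < 1 / (?y n - of_int (?d n))"
      using above[of "Suc n"] by (simp add: wQ_conj_cf_forms_Suc[OF Q])
    then have "?y n < of_int (?d n) + 1"
      using above[OF that] by (simp add: less_divide_eq)
    with above[OF that] show ?thesis
      by (simp add: floor_eq_iff)
  qed
  have "cf_rem (?y 1) n = ?y (Suc n)" for n
  proof (induction n)
    case (Suc n)
    then show ?case
      using floor_y[of "Suc n"] by (simp add: cf_rem_Suc cf_digit_def wQ_conj_cf_forms_Suc[OF Q])
  qed simp
  moreover have "cf_rem (wQ (cf_forms Q 1)) n = cf_rem (wQ Q) (Suc n)" for n
    using cf_rem_add[of "wQ Q" 1 n] by (simp add: cf_rem_wQ[OF Q])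
  ultimately have "cf_digit (wQ (cf_forms Q 1)) n = cf_digit (?y 1) n" for n
    using floor_y[of "Suc n"] by (simp add: cf_digit_def)
  then have "wQ (cf_forms Q 1) = ?y 1"
    using cf_digit_inj wQ_irrational[OF cf_forms_Qplus[OF Q]] by blast
  then show False
    using wQ_ne_wQ_conj[OF cf_forms_Qplus[OF Q]] by blast
qed

lemma wQ_conj_cf_forms_stays_negative:
  assumes Q: "Q \<in> Qplus" and "1 \<le> N" "wQ_conj (cf_forms Q N) < 0" "N \<le> n"
  shows "wQ_conj (cf_forms Q n) < 0"
  using assms(4)
proof (induction n rule: dec_induct)
  case (step n)
  obtain m where "n = Suc m"
    using \<open>1 \<le> N\<close> \<open>N \<le> n\<close> by (cases n) auto
  then have "1 \<le> cf_digit (wQ Q) n"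
    using cf_digit_Suc_ge_1[OF wQ_irrational(1)[OF Q]] by simp
  with step.IH show ?case
    by (simp add: wQ_conj_cf_forms_Suc[OF Q] divide_less_0_iff)
qed (use assms in simp)

lemma coeffs_bounded_by_disc:
  fixes a b c :: int
  assumes "0 < a" "c < 0"
  shows "\<bar>a\<bar> \<le> disc (a, b, c)" "\<bar>b\<bar> \<le> disc (a, b, c)" "\<bar>c\<bar> \<le> disc (a, b, c)"
proof -
  have "a \<le> - (a * c)"
    using mult_left_mono[of 1 "- c" a] assms by simp
  moreover have "- c \<le> - (a * c)"
    using mult_left_mono[of 1 a "- c"] assms by (simp add: mult.commute)
  moreover have "\<bar>b\<bar> \<le> b\<^sup>2"
  proof (cases "b = 0")
    case False
    then have "\<bar>b\<bar> * 1 \<le> \<bar>b\<bar> * \<bar>b\<bar>"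
      by (intro mult_left_mono) auto
    then show ?thesis
      by (simp add: power2_eq_square)
  qed simp
  moreover have "disc (a, b, c) = b\<^sup>2 - 4 * (a * c)" "\<bar>a\<bar> = a" "\<bar>c\<bar> = - c"
    using assms by (simp_all add: disc_def)
  ultimately show "\<bar>a\<bar> \<le> disc (a, b, c)" "\<bar>b\<bar> \<le> disc (a, b, c)" "\<bar>c\<bar> \<le> disc (a, b, c)"
    using zero_le_power2[of b] by linarith+
qed

lemma valid_preperiodI:
  assumes "cf_rem x (m + p) = cf_rem x m" "0 < p"
  shows "valid_preperiod x m"
  unfolding valid_preperiod_def
proof (intro exI conjI allI)
  fix j
  have "cf_rem x ((m + p) + (m + j)) = cf_rem x (m + (m + j))"
    using assms(1) by (simp only: cf_rem_add)
  moreover have "2*m + j + p = (m + p) + (m + j)" "2*m + j = m + (m + j)"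
    by simp_all
  ultimately have "cf_rem x (2*m + j + p) = cf_rem x (2*m + j)"
    by metis
  then show "cf_digit x (2*m + j + p) = cf_digit x (2*m + j)"
    by (simp add: cf_digit_def)
qed (fact assms(2))

lemma cf_forms_bounded:
  assumes Q: "Q \<in> Qplus" and N: "1 \<le> N" "wQ_conj (cf_forms Q N) < 0" and "N \<le> n"
  defines "D \<equiv> disc Q"
  shows "cf_forms Q n \<in> {-D..D} \<times> {-D..D} \<times> {-D..D}"
proof -
  obtain a b c where abc: "cf_forms Q n = (a, b, c)"
    by (cases "cf_forms Q n")
  have in_Qplus: "(a, b, c) \<in> Qplus"
    using cf_forms_Qplus[OF Q, of n] by (simp add: abc)
  obtain m where m: "n = Suc m"
    using N(1) \<open>N \<le> n\<close> by (cases n) auto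
  have "1 < wQ (a, b, c)"
    using cf_rem_Suc_gt_1[OF wQ_irrational(1)[OF Q], of m] cf_rem_wQ[OF Q, of n]
    by (simp add: abc flip: m)
  moreover have "wQ_conj (a, b, c) < 0"
    using wQ_conj_cf_forms_stays_negative[OF Q N \<open>N \<le> n\<close>] by (simp add: abc)
  ultimately have "0 < a" "c < 0"
    using Qplus_signs_of_roots[OF in_Qplus] by auto
  moreover have "disc (a, b, c) = D"
    using disc_cf_forms[of Q n] by (simp add: abc D_def)
  ultimately have "\<bar>a\<bar> \<le> D" "\<bar>b\<bar> \<le> D" "\<bar>c\<bar> \<le> D"
    using coeffs_bounded_by_disc[of a c b] by simp_all
  then show ?thesis
    unfolding abc by (simp add: abs_le_iff)
qed

text \<open>From index N on the forms are reduced, so only finitely many of them occur.\<close>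
theorem wQ_eventually_periodic:
  assumes Q: "Q \<in> Qplus"
  shows "\<exists>k. valid_preperiod (wQ Q) k"
proof -
  obtain N where N: "1 \<le> N" "wQ_conj (cf_forms Q N) < 0"
    using wQ_conj_cf_forms_eventually_negative[OF Q] by blast
  define D where "D = disc Q"
  have "cf_forms Q (N + n) \<in> {-D..D} \<times> {-D..D} \<times> {-D..D}" for n
    using cf_forms_bounded[OF Q N, of "N + n"] by (simp add: D_def)
  then have "range (\<lambda>n. cf_forms Q (N + n)) \<subseteq> {-D..D} \<times> {-D..D} \<times> {-D..D}"
    by blast
  then have "finite (range (\<lambda>n. cf_forms Q (N + n)))"
    by (rule finite_subset) simp
  then have "\<not> inj (\<lambda>n. cf_forms Q (N + n))"
    using finite_imageD infinite_UNIV_nat by blast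
  then obtain i j where "i < j" "cf_forms Q (N + i) = cf_forms Q (N + j)"
    unfolding inj_def by (metis linorder_neqE_nat)
  then have "cf_rem (wQ Q) (N + i + (j - i)) = cf_rem (wQ Q) (N + i)"
    by (simp add: cf_rem_wQ[OF Q])
  with \<open>i < j\<close> show ?thesis
    using valid_preperiodI[of "wQ Q" "N + i" "j - i"] by auto
qed

section \<open>Block words of periodic digit sequences\<close>

definition parity_letter :: "nat \<Rightarrow> letter" where
  "parity_letter i = (if even i then L else R)"

definition block_word :: "(nat \<Rightarrow> int) \<Rightarrow> nat \<Rightarrow> nat \<Rightarrow> letter list" where
  "block_word c z n = concat (map (\<lambda>i. replicate (nat (c i)) (parity_letter i)) [z..<z + n])"

lemma block_word_0 [simp]: "block_word c z 0 = []"
  by (simp add: block_word_def)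

lemma block_word_Suc: "block_word c z (Suc n) = replicate (nat (c z)) (parity_letter z) @ block_word c (Suc z) n"
proof -
  have "[z..<z + Suc n] = z # [Suc z..<Suc z + n]"
    by (simp add: upt_conv_Cons)
  then show ?thesis
    by (simp add: block_word_def)
qed

lemma block_word_add: "block_word c z (m + n) = block_word c z m @ block_word c (z + m) n"
proof -
  have "[z..<z + (m + n)] = [z..<z + m] @ [z + m..<z + m + n]"
    by (metis add.assoc le_add1 upt_add_eq_append)
  then show ?thesis
    by (simp add: block_word_def add.assoc)
qed

lemma block_word_cong: "(\<And>i. z \<le> i \<Longrightarrow> i < z + n \<Longrightarrow> c i = d i) \<Longrightarrow> block_word c z n = block_word d z n"
  unfolding block_word_def by (intro arg_cong[where f = concat] map_cong) auto

lemma block_word_shift: "even s \<Longrightarrow> block_word (\<lambda>i. c (i + s)) z n = block_word c (z + s) n"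
  by (induction n arbitrary: z) (simp_all add: block_word_Suc parity_letter_def)

lemma length_block_word_ge: "(\<And>i. 1 \<le> c i) \<Longrightarrow> n \<le> length (block_word c z n)"
proof (induction n arbitrary: z)
  case (Suc n)
  have "1 \<le> nat (c z)"
    using Suc.prems[of z] by simp
  moreover have "n \<le> length (block_word c (Suc z) n)"
    using Suc by blast
  ultimately show ?case
    by (simp add: block_word_Suc)
qed simp

lemma block_word_hd:
  assumes "\<And>i. 1 \<le> c i" "0 < n"
  shows "block_word c z n \<noteq> []" "hd (block_word c z n) = parity_letter z"
proof -
  obtain m where "n = Suc m"
    using assms(2) by (cases n) auto
  moreover obtain k where "nat (c z) = Suc k"
    using assms(1)[of z] by (cases "nat (c z)") auto
  ultimately show "block_word c z n \<noteq> []" "hd (block_word c z n) = parity_letter z"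
    by (simp_all add: block_word_Suc)
qed

lemma block_word_last:
  assumes "\<And>i. 1 \<le> c i" "0 < n"
  shows "last (block_word c z n) = parity_letter (z + n - 1)"
proof -
  obtain m where n: "n = m + 1"
    using assms(2) by (cases n) auto
  obtain k where "nat (c (z + m)) = Suc k"
    using assms(1)[of "z + m"] by (cases "nat (c (z + m))") auto
  then show ?thesis
    unfolding n block_word_add by (simp add: block_word_Suc)
qed

text \<open>The block structure of a word is recovered from the maximal runs of equal letters.\<close>
lemma block_word_inj:
  assumes "\<And>i. 1 \<le> c i" "\<And>i. 1 \<le> d i" "block_word c z n = block_word d z m"
  shows "n = m \<and> (\<forall>i. z \<le> i \<longrightarrow> i < z + n \<longrightarrow> c i = d i)"
  using assms(3)
proof (induction n arbitrary: z m)
  case 0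
  then show ?case
    using block_word_hd(1)[of d m z, OF assms(2)] by (cases m) auto
next
  case (Suc n)
  then obtain m' where m: "m = Suc m'"
    using block_word_hd(1)[of c "Suc n" z, OF assms(1)] by (cases m) auto
  have run: "takeWhile (\<lambda>y. y = parity_letter z) (replicate k (parity_letter z) @ block_word e (Suc z) l)
      = replicate k (parity_letter z)" if "\<And>i. 1 \<le> e i" for e k l
  proof (cases "l = 0")
    case False
    then have "block_word e (Suc z) l \<noteq> []" "hd (block_word e (Suc z) l) \<noteq> parity_letter z"
      using block_word_hd[of e l "Suc z", OF that] by (auto simp: parity_letter_def)
    then have "takeWhile (\<lambda>y. y = parity_letter z) (block_word e (Suc z) l) = []"
      by (simp add: takeWhile_eq_Nil_iff)
    then show ?thesis
      by (subst takeWhile_append2) auto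
  qed simp
  have eq: "replicate (nat (c z)) (parity_letter z) @ block_word c (Suc z) n
      = replicate (nat (d z)) (parity_letter z) @ block_word d (Suc z) m'"
    using Suc.prems by (simp add: m block_word_Suc)
  have "replicate (nat (c z)) (parity_letter z) = replicate (nat (d z)) (parity_letter z)"
    using arg_cong[OF eq, of "takeWhile (\<lambda>y. y = parity_letter z)"]
    unfolding run[OF assms(1)] run[OF assms(2)] .
  then have "c z = d z"
    using assms(1,2)[of z] by simp
  with eq have "block_word c (Suc z) n = block_word d (Suc z) m'"
    by simp
  then have "n = m'" and tail: "\<forall>i. Suc z \<le> i \<longrightarrow> i < Suc z + n \<longrightarrow> c i = d i"
    using Suc.IH by blast+
  have "c i = d i" if "z \<le> i" "i < z + Suc n" for i
    using that tail \<open>c z = d z\<close> by (cases "i = z") auto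
  with \<open>n = m'\<close> show ?case
    by (simp add: m)
qed

lemma other_parity_letter: "x \<noteq> parity_letter z \<Longrightarrow> x = parity_letter (Suc z)"
  by (cases x; cases "even z") (auto simp: parity_letter_def)

lemma word_eq_block_word:
  "xs \<noteq> [] \<Longrightarrow> hd xs = parity_letter z \<Longrightarrow> \<exists>n c. 1 \<le> n \<and> (\<forall>i. 1 \<le> c i) \<and> xs = block_word c z n"
proof (induction "length xs" arbitrary: xs z rule: less_induct)
  case less
  define run rest where "run = takeWhile (\<lambda>y. y = parity_letter z) xs"
    and "rest = dropWhile (\<lambda>y. y = parity_letter z) xs"
  have "\<forall>y\<in>set run. y = parity_letter z"
    by (auto simp: run_def dest: set_takeWhileD)
  then have "replicate (length run) (parity_letter z) = run"
    by (simp add: replicate_length_same)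
  moreover have "xs = run @ rest"
    by (simp add: run_def rest_def)
  ultimately have xs: "xs = replicate (length run) (parity_letter z) @ rest"
    by simp
  have "1 \<le> length run"
    using less.prems by (cases xs) (simp_all add: run_def)
  show ?case
  proof (cases "rest = []")
    case True
    then have "xs = block_word (\<lambda>_. int (length run)) z (Suc 0)"
      using xs by (simp add: block_word_Suc)
    with \<open>1 \<le> length run\<close> show ?thesis
      by (intro exI[of _ "Suc 0"] exI[of _ "\<lambda>_. int (length run)"]) auto
  next
    case False
    have "hd rest = parity_letter (Suc z)"
      using hd_dropWhile[of "\<lambda>y. y = parity_letter z" xs] other_parity_letter False
      unfolding rest_def by blast
    moreover have "length rest < length xs"
    proof -
      have "length xs = length run + length rest"
        using arg_cong[OF xs, of length] by simp
      then show ?thesis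
        using \<open>1 \<le> length run\<close> by linarith
    qed
    ultimately obtain n c where "1 \<le> n" "\<forall>i. 1 \<le> c i" "rest = block_word c (Suc z) n"
      using less.hyps[of rest "Suc z"] False by blast
    define c' where "c' = c(z := int (length run))"
    have "block_word c' (Suc z) n = block_word c (Suc z) n"
      by (rule block_word_cong) (simp add: c'_def)
    then have "xs = block_word c' z (Suc n)"
      using xs \<open>rest = block_word c (Suc z) n\<close> by (simp add: block_word_Suc c'_def)
    moreover have "\<forall>i. 1 \<le> c' i"
      using \<open>\<forall>i. 1 \<le> c i\<close> \<open>1 \<le> length run\<close> by (simp add: c'_def)
    ultimately show ?thesis
      by (intro exI[of _ "Suc n"] exI[of _ c']) simp
  qed
qed

definition is_period :: "(nat \<Rightarrow> 'a) \<Rightarrow> nat \<Rightarrow> bool" where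
  "is_period c p \<longleftrightarrow> (\<forall>j. c (j + p) = c j)"

definition least_period :: "(nat \<Rightarrow> 'a) \<Rightarrow> nat" where
  "least_period c = (LEAST p. 0 < p \<and> is_period c p)"

definition least_even_period :: "(nat \<Rightarrow> 'a) \<Rightarrow> nat" where
  "least_even_period c = (if even (least_period c) then least_period c else 2 * least_period c)"

lemma is_period_mult: "is_period c p \<Longrightarrow> c (j + q * p) = c j"
proof (induction q)
  case (Suc q)
  then have "c ((j + q * p) + p) = c (j + q * p)"
    by (simp add: is_period_def)
  with Suc show ?case
    by (simp add: algebra_simps)
qed simp

lemma is_period_mod: "is_period c p \<Longrightarrow> c j = c (j mod p)"
  using is_period_mult[of c p "j mod p" "j div p"] by simp

lemma is_period_multiple: "is_period c p \<Longrightarrow> is_period c (q * p)"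
  using is_period_mult[of c p] by (simp add: is_period_def)

lemma is_period_mod_period:
  assumes "is_period c p" "is_period c m"
  shows "is_period c (p mod m)"
  unfolding is_period_def
proof
  fix j
  have "c (j + p mod m) = c (j + p mod m + (p div m) * m)"
    by (rule is_period_mult[OF assms(2), symmetric])
  also have "j + p mod m + (p div m) * m = j + p"
    by simp
  also have "c (j + p) = c j"
    using assms(1) by (simp add: is_period_def)
  finally show "c (j + p mod m) = c j" .
qed

lemma least_period:
  assumes "0 < p" "is_period c p"
  shows "0 < least_period c" "is_period c (least_period c)" "least_period c dvd p"
proof -
  have "0 < least_period c \<and> is_period c (least_period c)"
    unfolding least_period_def by (rule LeastI[of _ p]) (use assms in auto)
  then show lp: "0 < least_period c" "is_period c (least_period c)"
    by auto
  show "least_period c dvd p"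
  proof (rule ccontr)
    assume "\<not> least_period c dvd p"
    then have "0 < p mod least_period c"
      by (simp add: dvd_eq_mod_eq_0)
    moreover have "is_period c (p mod least_period c)"
      using is_period_mod_period[OF assms(2) lp(2)] .
    ultimately have "least_period c \<le> p mod least_period c"
      unfolding least_period_def by (intro Least_le) auto
    with lp(1) show False
      by (meson mod_less_divisor not_le)
  qed
qed

lemma least_even_period:
  assumes "0 < p" "is_period c p"
  shows "0 < least_even_period c" "even (least_even_period c)" "is_period c (least_even_period c)"
  using least_period[OF assms] is_period_multiple[of c "least_period c" 2]
  by (auto simp: least_even_period_def)

lemma least_even_period_dvd:
  assumes "0 < p" "is_period c p" "even p"
  shows "least_even_period c dvd p"
proof (cases "even (least_period c)")
  case False
  then have "coprime 2 (least_period c)"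
    by simp
  then show ?thesis
    using False least_period(3)[OF assms(1,2)] assms(3)
    by (simp add: least_even_period_def divides_mult)
qed (use least_period(3)[OF assms(1,2)] in \<open>simp add: least_even_period_def\<close>)

lemma is_period_shift_iff:
  assumes "0 < q" "is_period d q"
  shows "is_period (\<lambda>t. d (t + e)) p \<longleftrightarrow> is_period d p"
proof
  assume shifted: "is_period (\<lambda>t. d (t + e)) p"
  show "is_period d p"
    unfolding is_period_def
  proof
    fix j
    define j' where "j' = j + (e * q - e)" \<comment> \<open>\<open>j - e\<close> up to a multiple of the period \<open>q\<close>\<close>
    have "e \<le> e * q"
      using assms(1) by simp
    then have j': "j' + e = j + e * q"
      unfolding j'_def by linarith
    have "j + p + e * q = j' + p + e"
      using j' by simp
    then have "d (j + p) = d (j' + p + e)"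
      using is_period_mult[OF assms(2), of "j + p" e] by metis
    also have "\<dots> = d (j' + e)"
      using shifted unfolding is_period_def by (metis (no_types))
    also have "\<dots> = d j"
      using is_period_mult[OF assms(2), of j e] j' by simp
    finally show "d (j + p) = d j" .
  qed
next
  assume "is_period d p"
  then have "d ((j + e) + p) = d (j + e)" for j
    by (simp add: is_period_def)
  then show "is_period (\<lambda>t. d (t + e)) p"
    by (simp add: is_period_def add.commute add.left_commute)
qed

lemma least_even_period_shift:
  "0 < q \<Longrightarrow> is_period d q \<Longrightarrow> least_even_period (\<lambda>t. d (t + e)) = least_even_period d"
  unfolding least_even_period_def least_period_def by (simp add: is_period_shift_iff)

lemma block_word_periodic:
  assumes "is_period c P" "even P"
  shows "block_word c (z + q * P) n = block_word c z n"
proof -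
  have "block_word c (z + q * P) n = block_word (\<lambda>i. c (i + q * P)) z n"
    using block_word_shift[of "q * P" c z n] assms(2) by simp
  also have "\<dots> = block_word c z n"
    using is_period_mult[OF assms(1)] by simp
  finally show ?thesis .
qed

lemma block_word_power:
  assumes "is_period c P" "even P"
  shows "block_word c 0 (r * P) = concat (replicate r (block_word c 0 P))"
proof (induction r)
  case (Suc r)
  have "block_word c 0 (P + r * P) = block_word c 0 P @ block_word c (0 + 1 * P) (r * P)"
    by (simp add: block_word_add)
  also have "block_word c (0 + 1 * P) (r * P) = block_word c 0 (r * P)"
    by (rule block_word_periodic[OF assms])
  finally show ?case
    using Suc by simp
qed simp

lemma cyc_equiv_refl: "cyc_equiv u u"
  unfolding cyc_equiv_def by (metis rotate0 id_apply)

lemma rotate_back: "\<exists>m. rotate m (rotate n xs) = xs"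
proof (cases "xs = []")
  case False
  have "rotate (length xs * n - n) (rotate n xs) = rotate (length xs * n) xs"
    using False by (simp add: rotate_rotate Suc_le_eq)
  also have "\<dots> = xs"
    by simp
  finally show ?thesis ..
qed simp

lemma cyc_equiv_sym: "cyc_equiv u v \<Longrightarrow> cyc_equiv v u"
  unfolding cyc_equiv_def using rotate_back by blast

lemma cyc_equiv_length: "cyc_equiv u v \<Longrightarrow> length u = length v"
  unfolding cyc_equiv_def by auto

lemma rotate1_concat_replicate: "rotate1 (concat (replicate m v)) = concat (replicate m (rotate1 v))"
proof (cases v)
  case (Cons x v')
  have "concat (replicate m (x # v')) @ [x] = x # concat (replicate m (v' @ [x]))" for m
    by (induction m) auto
  then show ?thesis
    by (cases m) (simp_all add: Cons)
qed simp

lemma rotate_concat_replicate: "rotate n (concat (replicate m v)) = concat (replicate m (rotate n v))"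
  by (induction n) (simp_all add: rotate1_concat_replicate)

lemma last_concat_replicate: "u \<noteq> [] \<Longrightarrow> last (concat (replicate (Suc k) u)) = last u"
  by (induction k) simp_all

lemma primitive_word_cyc_equiv: "primitive_word w \<Longrightarrow> cyc_equiv w v \<Longrightarrow> primitive_word v"
  unfolding primitive_word_def cyc_equiv_def
  by (metis rotate_back rotate_concat_replicate rotate_is_Nil_conv)

text \<open>If the word were a proper power of u, then u itself would be the block word of a
  shorter even period.\<close>
lemma block_word_primitive:
  assumes pos: "\<And>i. 1 \<le> c i" and "0 < p" "is_period c p"
  shows "primitive_word (block_word c 0 (least_even_period c))"
proof -
  define P where "P = least_even_period c"
  have P: "0 < P" "even P" "is_period c P"
    using least_even_period[OF assms(2,3)] by (simp_all add: P_def)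
  define W where "W = block_word c 0 P"
  have W: "W \<noteq> []" "hd W = L" "last W = R"
    using block_word_hd[of c P 0, OF pos P(1)] block_word_last[of c P 0, OF pos P(1)] P(1,2)
    by (simp_all add: W_def parity_letter_def)
  have "\<not> (\<exists>u m. 2 \<le> m \<and> W = concat (replicate m u))"
  proof
    assume "\<exists>u m. 2 \<le> m \<and> W = concat (replicate m u)"
    then obtain u m where m: "2 \<le> m" and Wu: "W = concat (replicate m u)"
      by blast
    obtain k where k: "m = Suc (Suc k)"
      using m by (metis add_2_eq_Suc le_Suc_ex)
    have "u \<noteq> []"
      using W(1) Wu by auto
    moreover have "hd u = parity_letter 0" "last u = R"
      using W(2,3) \<open>u \<noteq> []\<close> last_concat_replicate[of u "Suc k"]
      by (simp_all add: Wu k parity_letter_def)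
    ultimately obtain N d where N: "1 \<le> N" "\<forall>i. 1 \<le> d i" and u: "u = block_word d 0 N"
      using word_eq_block_word by blast
    then have "even N"
      using block_word_last[of d N 0] \<open>last u = R\<close>
      by (cases "even (N - 1)") (auto simp: parity_letter_def)
    define d' where "d' i = d (i mod N)" for i
    have d': "is_period d' N" "\<And>i. 1 \<le> d' i"
      using N by (simp_all add: d'_def is_period_def)
    have "u = block_word d' 0 N"
      unfolding u by (rule block_word_cong) (simp add: d'_def)
    then have "block_word c 0 P = block_word d' 0 (m * N)"
      using block_word_power[OF d'(1) \<open>even N\<close>] by (simp add: Wu flip: W_def)
    then have "P = m * N \<and> (\<forall>i. 0 \<le> i \<longrightarrow> i < 0 + P \<longrightarrow> c i = d' i)"
      by (rule block_word_inj[of c d', OF pos d'(2)])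
    then have "P = m * N" and agree: "\<And>i. i < P \<Longrightarrow> c i = d' i"
      by simp_all
    have "c i = d' i" for i
    proof -
      have "c i = c (i mod P)"
        by (rule is_period_mod[OF P(3)])
      also have "\<dots> = d' (i mod P)"
        using agree P(1) by simp
      also have "\<dots> = d' i"
        using is_period_mod[OF is_period_multiple[OF d'(1)], of i m] \<open>P = m * N\<close>
        by simp
      finally show ?thesis .
    qed
    then have "c = d'"
      by blast
    then have "is_period c N"
      using d'(1) by simp
    then have "P \<le> N"
      using least_even_period_dvd[of N c] N(1) \<open>even N\<close> by (simp add: P_def dvd_imp_le)
    moreover have "N < P"
      using \<open>P = m * N\<close> m N(1) by simp
    ultimately show False
      by simp
  qed
  then show ?thesis
    using W(1) by (simp add: primitive_word_def W_def P_def)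
qed

section \<open>Serret's theorem\<close>

definition cf_tails_meet :: "real \<Rightarrow> real \<Rightarrow> bool \<Rightarrow> bool" where
  "cf_tails_meet x y b \<longleftrightarrow> (\<exists>i j. cf_rem x i = cf_rem y j \<and> even (i + j) = b)"

lemma cf_tails_meet_sym: "cf_tails_meet x y b \<Longrightarrow> cf_tails_meet y x b"
  unfolding cf_tails_meet_def by (metis add.commute)

lemma cf_tails_meet_trans:
  assumes "cf_tails_meet x y b" "cf_tails_meet y z b'"
  shows "cf_tails_meet x z (b = b')"
proof -
  obtain i j k l where "cf_rem x i = cf_rem y j" "even (i + j) = b" "cf_rem y k = cf_rem z l" "even (k + l) = b'"
    using assms unfolding cf_tails_meet_def by blast
  then have "cf_rem x (i + k) = cf_rem z (l + j)"
    by (metis add.commute cf_rem_add)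
  moreover have "even (i + k + (l + j)) = (b = b')"
    using \<open>even (i + j) = b\<close> \<open>even (k + l) = b'\<close> by auto
  ultimately show ?thesis
    unfolding cf_tails_meet_def by blast
qed

lemma cf_rem_Suc_add_int: "cf_rem (x + of_int n) (Suc k) = cf_rem x (Suc k)"
  using cf_rem_add[of "x + of_int n" 1 k] cf_rem_add[of x 1 k] by (simp add: cf_rem_Suc cf_digit_def)

lemma cf_tails_meetI:
  assumes "cf_rem x i = cf_rem y j + of_int n"
  shows "cf_tails_meet x y (even (i + j))"
proof -
  have "cf_rem x (i + 1) = cf_rem (cf_rem y j + of_int n) 1"
    by (simp only: cf_rem_add assms)
  also have "\<dots> = cf_rem y (j + 1)"
    using cf_rem_Suc_add_int[of "cf_rem y j" n 0] by (simp only: cf_rem_add One_nat_def)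
  finally have "cf_rem x (i + 1) = cf_rem y (j + 1)" .
  then show ?thesis
    unfolding cf_tails_meet_def by (intro exI[of _ "i + 1"] exI[of _ "j + 1"]) simp
qed

lemma cf_tails_meet_add_int: "cf_tails_meet (x + of_int n) x True"
  using cf_tails_meetI[of "x + of_int n" 0 x 0 n] by simp

lemma cf_tails_meet_inverse_pos:
  assumes "x \<notin> \<rat>" "0 < x"
  shows "cf_tails_meet x (1 / x) False"
proof (cases "x < 1")
  case True
  then have "cf_rem x 1 = cf_rem (1 / x) 0 + of_int 0"
    using assms(2) by (simp add: cf_rem_Suc cf_digit_def floor_eq_iff)
  then show ?thesis
    using cf_tails_meetI by fastforce
next
  case False
  with assms have "1 < x"
    by (metis Rats_1 linorder_neqE_linordered_idom)
  then have "\<lfloor>1 / x\<rfloor> = 0"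
    by (simp add: floor_eq_iff)
  then have "cf_rem (1 / x) 1 = cf_rem x 0 + of_int 0"
    by (simp add: cf_rem_Suc cf_digit_def)
  then show ?thesis
    using cf_tails_meetI cf_tails_meet_sym by fastforce
qed

lemma cf_tails_meet_uminus:
  assumes u: "u \<notin> \<rat>"
  shows "cf_tails_meet u (- u) False"
proof -
  define f where "f = u - of_int \<lfloor>u\<rfloor>"
  have f: "0 < f" "f < 1"
    using frac_part_irrational[OF u] by (simp_all add: f_def)
  have "f \<noteq> 1 / 2"
  proof
    assume "f = 1 / 2"
    then have "u = of_int \<lfloor>u\<rfloor> + 1 / 2"
      by (simp add: f_def)
    with u show False
      by (metis Rats_add Rats_divide Rats_number_of Rats_1 Rats_of_int)
  qed
  have "\<lfloor>- u\<rfloor> = - \<lfloor>u\<rfloor> - 1"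
    using f by (simp add: f_def floor_eq_iff)
  then have neg1: "cf_rem (- u) 1 = 1 / (1 - f)"
    by (simp add: cf_rem_Suc cf_digit_def f_def algebra_simps)
  have pos1: "cf_rem u 1 = 1 / f"
    by (simp add: cf_rem_Suc cf_digit_def f_def)
  have rem2: "cf_rem x 2 = 1 / (cf_rem x 1 - of_int \<lfloor>cf_rem x 1\<rfloor>)" for x
    by (simp add: numeral_2_eq_2 cf_rem_Suc cf_digit_def)
  show ?thesis
  proof (cases "f < 1 / 2")
    case True
    then have "\<lfloor>1 / (1 - f)\<rfloor> = 1"
      using f by (simp add: floor_eq_iff field_simps)
    then have "cf_rem (- u) 2 = cf_rem u 1 + of_int (- 1)"
      unfolding rem2 neg1 pos1 using f by (simp add: field_simps)
    then show ?thesis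
      using cf_tails_meet_sym[OF cf_tails_meetI] by fastforce
  next
    case False
    with \<open>f \<noteq> 1 / 2\<close> have "\<lfloor>1 / f\<rfloor> = 1"
      using f by (simp add: floor_eq_iff field_simps)
    then have "cf_rem (- u) 1 = cf_rem u 2 + of_int 1"
      unfolding rem2 neg1 pos1 using f by (simp add: field_simps)
    then show ?thesis
      using cf_tails_meet_sym[OF cf_tails_meetI] by fastforce
  qed
qed

lemma cf_tails_meet_inverse:
  assumes "y \<notin> \<rat>"
  shows "cf_tails_meet y (1 / y) False"
proof (cases "0 < y")
  case True
  then show ?thesis
    using cf_tails_meet_inverse_pos[OF assms] by blast
next
  case False
  then have "0 < - y"
    using assms by (cases "y = 0") auto
  have "- y \<notin> \<rat>" "1 / (- y) \<notin> \<rat>"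
    using assms by (simp_all add: divide_inverse)
  then have "cf_tails_meet y (- (1 / (- y))) False"
    using cf_tails_meet_trans[OF cf_tails_meet_trans[OF cf_tails_meet_uminus[OF assms]
        cf_tails_meet_inverse_pos[OF _ \<open>0 < - y\<close>]] cf_tails_meet_uminus]
    by simp
  then show ?thesis
    by simp
qed

definition moebius :: "mat2 \<Rightarrow> real \<Rightarrow> real" where
  "moebius g x = (case g of (al, be, ga, de) \<Rightarrow> (of_int al * x + of_int be) / (of_int ga * x + of_int de))"

lemma cf_tails_meet_moebius_triangular:
  assumes "al * de = 1 \<or> al * de = -1" "x \<notin> \<rat>"
  shows "moebius (al, be, 0, de) x \<notin> \<rat> \<and> cf_tails_meet x (moebius (al, be, 0, de) x) (al * de = 1)"
proof -
  have "de = 1 \<or> de = -1"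
    using assms(1) zmult_eq_1_iff zmult_eq_neg1_iff by blast
  define n where "n = be * de"
  from \<open>de = 1 \<or> de = -1\<close> have m: "moebius (al, be, 0, de) x = of_int (al * de) * x + of_int n"
    by (auto simp: moebius_def n_def)
  show ?thesis
  proof (cases "al * de = 1")
    case True
    then show ?thesis
      using assms(2) cf_tails_meet_sym[OF cf_tails_meet_add_int[of x n]] by (simp add: m Rats_add_iff)
  next
    case False
    with assms(1) have "al * de = -1"
      by blast
    moreover have "cf_tails_meet x (- x + of_int n) False"
      using cf_tails_meet_trans[OF cf_tails_meet_uminus[OF assms(2)]
          cf_tails_meet_sym[OF cf_tails_meet_add_int[of "- x" n]]] by simp
    ultimately show ?thesis
      using assms(2) by (simp add: m Rats_diff_iff)
  qed
qed

text \<open>Proved along the Euclidean algorithm on the lower row; the parity of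
  the index shift records the sign of the determinant.\<close>
lemma cf_tails_meet_moebius:
  assumes "al * de - be * ga = 1 \<or> al * de - be * ga = -1" "x \<notin> \<rat>"
  shows "moebius (al, be, ga, de) x \<notin> \<rat> \<and>
    cf_tails_meet x (moebius (al, be, ga, de) x) (al * de - be * ga = 1)"
  using assms(1)
proof (induction "nat \<bar>ga\<bar>" arbitrary: al be ga de rule: less_induct)
  case less
  show ?case
  proof (cases "ga = 0")
    case True
    then show ?thesis
      using cf_tails_meet_moebius_triangular[of al de x be] less.prems assms(2) by simp
  next
    case False
    define q r where "q = al div ga" and "r = al mod ga"
    define be' where "be' = be - q * de"
    have al: "al = q * ga + r"
      by (simp add: q_def r_def)
    have det: "ga * be' - de * r = - (al * de - be * ga)"
      by (simp add: be'_def al algebra_simps)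
    define y where "y = moebius (ga, de, r, be') x"
    have "nat \<bar>r\<bar> < nat \<bar>ga\<bar>"
      using abs_mod_less[OF False, of al] by (simp add: r_def)
    then have IH: "y \<notin> \<rat> \<and> cf_tails_meet x y (ga * be' - de * r = 1)"
      using less.hyps[of r ga be' de] less.prems det by (auto simp: y_def)
    have "of_int ga * x + of_int de \<noteq> 0"
    proof
      assume "of_int ga * x + of_int de = 0"
      then have "x = - of_int de / of_int ga"
        using False by (simp add: field_simps)
      with assms(2) show False
        by simp
    qed
    then have "moebius (al, be, ga, de) x = 1 / y + of_int q"
      by (simp add: moebius_def y_def al be'_def field_simps)
    moreover have "1 / y \<notin> \<rat>"
      using IH by (simp add: divide_inverse)
    moreover have "cf_tails_meet x (1 / y + of_int q) (ga * be' - de * r \<noteq> 1)"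
      using cf_tails_meet_trans[OF cf_tails_meet_trans[OF conjunct2[OF IH]
          cf_tails_meet_inverse[OF conjunct1[OF IH]]] cf_tails_meet_sym[OF cf_tails_meet_add_int]]
      by simp
    moreover have "(ga * be' - de * r \<noteq> 1) = (al * de - be * ga = 1)"
      using det less.prems by auto
    ultimately show ?thesis
      by (simp add: Rats_add_iff)
  qed
qed

lemma disc_qact: "disc (qact Q (al, be, ga, de)) = (al * de - be * ga)\<^sup>2 * disc Q"
  by (cases Q) (simp add: qact_def disc_def power2_eq_square algebra_simps)

lemma qact_Qplus: "Q \<in> Qplus \<Longrightarrow> g \<in> SL2Z \<Longrightarrow> qact Q g \<in> Qplus"
  by (cases g) (simp add: SL2Z_def Qplus_def disc_qact)

lemma qact_root_identity:
  fixes A B C al be ga de s :: real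
  assumes "s\<^sup>2 = B\<^sup>2 - 4*A*C" "al*de - be*ga = 1"
  shows "(s - (2*A*al*be + B*(al*de + be*ga) + 2*C*ga*de)) * (- ga * (s - B) + 2*A*al)
       = 2 * (A*al\<^sup>2 + B*al*ga + C*ga\<^sup>2) * (de * (s - B) - 2*A*be)"
  using assms by algebra

lemma wQ_qact:
  assumes Q: "Q \<in> Qplus" and "(al, be, ga, de) \<in> SL2Z"
  shows "wQ (qact Q (al, be, ga, de)) = moebius (de, - be, - ga, al) (wQ Q)"
proof -
  obtain A B C where Qe: "Q = (A, B, C)"
    by (cases Q)
  obtain A' B' C' where Q'e: "qact Q (al, be, ga, de) = (A', B', C')"
    by (cases "qact Q (al, be, ga, de)")
  have det: "al * de - be * ga = 1"
    using assms(2) by (simp add: SL2Z_def)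
  have Q': "(A', B', C') \<in> Qplus"
    using qact_Qplus[OF Q assms(2)] by (simp add: Q'e)
  have coeffs: "A' = A*al\<^sup>2 + B*al*ga + C*ga\<^sup>2" "B' = 2*A*al*be + B*(al*de + be*ga) + 2*C*ga*de"
    using Q'e by (simp_all add: Qe qact_def)
  have "disc (A', B', C') = disc (A, B, C)"
    using disc_qact[of Q al be ga de] det unfolding Q'e by (simp add: Qe)
  note r = Qplus_roots[OF Q[unfolded Qe]] and r' = Qplus_roots[OF Q', unfolded this]
  define s x w' where "s = sqrt (of_int (disc (A, B, C)))" and "x = wQ Q" and "w' = wQ (A', B', C')"
  have x: "s - of_int B = 2 * of_int A * x" and w': "s - of_int B' = 2 * of_int A' * w'"
    using r(3) r'(3) by (simp_all add: s_def x_def w'_def Qe)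
  have "of_int A \<noteq> (0::real)" "of_int A' \<noteq> (0::real)"
    using Qplus_fst_nonzero Q[unfolded Qe] Q' by auto
  have den: "- of_int ga * x + of_int al \<noteq> 0"
  proof
    assume "- of_int ga * x + of_int al = 0"
    have "x \<notin> \<rat>"
      using wQ_irrational(1)[OF Q] by (simp add: x_def)
    show False
    proof (cases "ga = 0")
      case True
      with \<open>- of_int ga * x + of_int al = 0\<close> det show False
        by simp
    next
      case False
      with \<open>- of_int ga * x + of_int al = 0\<close> have "x = of_int al / of_int ga"
        by (simp add: field_simps)
      with \<open>x \<notin> \<rat>\<close> show False
        by simp
    qed
  qed
  have "(s - of_int B') * (- of_int ga * (s - of_int B) + 2 * of_int A * of_int al)
      = 2 * of_int A' * (of_int de * (s - of_int B) - 2 * of_int A * of_int be)"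
    using qact_root_identity[OF r(2), of al de be ga] det unfolding coeffs
    by (simp add: s_def) (metis of_int_1 of_int_diff of_int_mult)
  then have "(2 * of_int A') * ((2 * of_int A) * (w' * (- of_int ga * x + of_int al)))
      = (2 * of_int A') * ((2 * of_int A) * (of_int de * x - of_int be))"
    unfolding x w' by (simp add: algebra_simps)
  then have "(2 * of_int A) * (w' * (- of_int ga * x + of_int al)) = (2 * of_int A) * (of_int de * x - of_int be)"
    using \<open>of_int A' \<noteq> 0\<close> by simp
  then have "w' = (of_int de * x - of_int be) / (- of_int ga * x + of_int al)"
    using \<open>of_int A \<noteq> 0\<close> den by (simp add: eq_divide_eq)
  then show ?thesis
    by (simp add: moebius_def x_def w'_def Q'e)
qed

lemma cf_tails_meet_qact:
  assumes "Q \<in> Qplus" "g \<in> SL2Z"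
  shows "cf_tails_meet (wQ Q) (wQ (qact Q g)) True"
proof -
  obtain al be ga de where g: "g = (al, be, ga, de)"
    by (cases g)
  have "de * al - (- be) * (- ga) = 1"
    using assms(2) by (simp add: g SL2Z_def algebra_simps)
  then show ?thesis
    using cf_tails_meet_moebius[of de al "- be" "- ga" "wQ Q"] wQ_irrational(1)[OF assms(1)]
      wQ_qact[OF assms(1) assms(2)[unfolded g]]
    by (simp add: g)
qed

section \<open>Purely periodic continued fractions\<close>

primrec cf_eval :: "int list \<Rightarrow> real \<Rightarrow> real" where
  "cf_eval [] z = z"
| "cf_eval (a # as) z = of_int a + 1 / cf_eval as z"

text \<open>The product of the matrices [[a, 1], [1, 0]] over the list.\<close>
primrec cf_matrix :: "int list \<Rightarrow> mat2" where
  "cf_matrix [] = (1, 0, 0, 1)"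
| "cf_matrix (a # as) = (case cf_matrix as of (p, p', q, q') \<Rightarrow> (a*p + q, a*p' + q', p, p'))"

lemma cf_eval_pos: "\<forall>a\<in>set as. 1 \<le> a \<Longrightarrow> 0 < z \<Longrightarrow> 0 < cf_eval as z"
proof (induction as)
  case (Cons a as)
  then have "0 < 1 / cf_eval as z" "1 \<le> (of_int a :: real)"
    by simp_all
  then show ?case
    by (simp only: cf_eval.simps)
qed simp

lemma cf_eval_Cons_gt_1:
  assumes "\<forall>a\<in>set (b # as). 1 \<le> a" "0 < z"
  shows "1 < cf_eval (b # as) z"
proof -
  have "0 < 1 / cf_eval as z" "1 \<le> (of_int b :: real)"
    using cf_eval_pos[of as z] assms by simp_all
  then show ?thesis
    by (simp only: cf_eval.simps)
qed

lemma cf_eval_gt_1: "\<forall>a\<in>set as. 1 \<le> a \<Longrightarrow> 1 < z \<Longrightarrow> 1 < cf_eval as z"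
  using cf_eval_Cons_gt_1[of "hd as" "tl as" z] by (cases as) simp_all

lemma cf_rem_cf_eval:
  "\<forall>a\<in>set as. 1 \<le> a \<Longrightarrow> 1 < z \<Longrightarrow> i \<le> length as \<Longrightarrow> cf_rem (cf_eval as z) i = cf_eval (drop i as) z"
proof (induction as arbitrary: i)
  case (Cons a as)
  show ?case
  proof (cases i)
    case (Suc j)
    have e: "1 < cf_eval as z"
      using cf_eval_gt_1 Cons.prems by simp
    then have "\<lfloor>cf_eval (a # as) z\<rfloor> = a"
      by (simp add: floor_eq_iff)
    then have "cf_rem (cf_eval (a # as) z) 1 = cf_eval as z"
      by (simp add: cf_rem_Suc cf_digit_def)
    then show ?thesis
      using Cons cf_rem_add[of "cf_eval (a # as) z" 1 j] by (simp add: Suc)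
  qed simp
qed simp

lemma cf_digit_cf_eval:
  assumes "\<forall>a\<in>set as. 1 \<le> a" "1 < z" "i < length as"
  shows "cf_digit (cf_eval as z) i = as ! i"
proof -
  have "drop i as = as ! i # drop (Suc i) as"
    using assms(3) by (simp add: Cons_nth_drop_Suc)
  moreover have "1 < cf_eval (drop (Suc i) as) z"
    using assms(1,2) by (intro cf_eval_gt_1) (auto dest: in_set_dropD)
  ultimately show ?thesis
    using cf_rem_cf_eval[OF assms(1,2), of i] assms(3) by (simp add: cf_digit_def floor_eq_iff)
qed

lemma cf_digit_fixed_point:
  assumes "\<forall>a\<in>set as. 1 \<le> a" "as \<noteq> []" "0 < x" "cf_eval as x = x"
  shows "cf_digit x t = as ! (t mod length as)"
proof -
  have "1 < x"
    using cf_eval_Cons_gt_1[of "hd as" "tl as" x] assms by simp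
  then have "cf_rem x (length as) = x"
    using cf_rem_cf_eval[OF assms(1), of x "length as"] assms(4) by simp
  then have "cf_rem x (q * length as + r) = cf_rem x r" for q r
    by (induction q) (simp_all add: cf_rem_add[of x "length as"] add.assoc flip: cf_rem_add)
  then have "cf_digit x t = cf_digit x (t mod length as)"
    by (metis cf_digit_def div_mult_mod_eq)
  also have "\<dots> = as ! (t mod length as)"
    using cf_digit_cf_eval[OF assms(1) \<open>1 < x\<close>, of "t mod length as"] assms(2) assms(4) by simp
  finally show ?thesis .
qed

lemma cf_matrix_nonneg:
  "\<forall>a\<in>set as. 1 \<le> a \<Longrightarrow> cf_matrix as = (p, p', q, q') \<Longrightarrow> 1 \<le> p \<and> 0 \<le> p' \<and> 0 \<le> q \<and> 0 \<le> q' \<and> 1 \<le> p' + q'"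
proof (induction as arbitrary: p p' q q')
  case (Cons a as)
  obtain p0 p0' q0 q0' where m: "cf_matrix as = (p0, p0', q0, q0')"
    by (cases "cf_matrix as")
  with Cons have "1 \<le> p0" "0 \<le> p0'" "0 \<le> q0" "0 \<le> q0'" "1 \<le> p0' + q0'" "1 \<le> a"
    by auto
  moreover have "p = a * p0 + q0" "p' = a * p0' + q0'" "q = p0" "q' = p0'"
    using Cons.prems(2) by (auto simp: m)
  moreover have "p0 \<le> a * p0" "p0' \<le> a * p0'"
    using calculation by (simp_all add: mult_right_mono[of 1 a, simplified])
  ultimately show ?case
    by linarith
qed auto

lemma cf_matrix_Cons_pos:
  assumes "\<forall>a\<in>set (b # as). 1 \<le> a" "cf_matrix (b # as) = (p, p', q, q')"
  shows "1 \<le> p' \<and> 1 \<le> q"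
proof -
  obtain p0 p0' q0 q0' where m: "cf_matrix as = (p0, p0', q0, q0')"
    by (cases "cf_matrix as")
  then have "1 \<le> p0" "0 \<le> p0'" "1 \<le> p0' + q0'"
    using cf_matrix_nonneg[of as] assms(1) by auto
  moreover have "p0' \<le> b * p0'"
    using assms(1) \<open>0 \<le> p0'\<close> by (simp add: mult_right_mono[of 1 b, simplified])
  moreover have "p' = b * p0' + q0'" "q = p0"
    using assms(2) by (auto simp: m)
  ultimately show ?thesis
    by linarith
qed

lemma cf_matrix_det: "cf_matrix as = (p, p', q, q') \<Longrightarrow> p * q' - p' * q = (-1) ^ length as"
proof (induction as arbitrary: p p' q q')
  case (Cons a as)
  obtain p0 p0' q0 q0' where "cf_matrix as = (p0, p0', q0, q0')"
    by (cases "cf_matrix as")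
  with Cons show ?case
    by (auto simp: algebra_simps)
qed auto

lemma cf_eval_cf_matrix:
  "\<forall>a\<in>set as. 1 \<le> a \<Longrightarrow> 0 < z \<Longrightarrow> cf_matrix as = (p, p', q, q')
    \<Longrightarrow> cf_eval as z = (of_int p * z + of_int p') / (of_int q * z + of_int q')"
proof (induction as arbitrary: p p' q q')
  case (Cons a as)
  obtain p0 p0' q0 q0' where m: "cf_matrix as = (p0, p0', q0, q0')"
    by (cases "cf_matrix as")
  then have "1 \<le> p0" "0 \<le> p0'"
    using cf_matrix_nonneg[of as] Cons.prems(1) by auto
  then have "0 < of_int p0 * z + of_int p0'"
    using Cons.prems(2) by (simp add: add_pos_nonneg)
  moreover have "cf_eval as z = (of_int p0 * z + of_int p0') / (of_int q0 * z + of_int q0')"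
    using Cons m by simp
  moreover have "p = a * p0 + q0" "p' = a * p0' + q0'" "q = p0" "q' = p0'"
    using Cons.prems(3) by (auto simp: m)
  ultimately show ?case
    by (simp add: field_simps)
qed simp

lemma square_minus_4_not_square:
  fixes T n :: int
  assumes "3 \<le> T"
  shows "T\<^sup>2 - 4 \<noteq> n\<^sup>2"
proof
  assume eq: "T\<^sup>2 - 4 = n\<^sup>2"
  have "(T - 1)\<^sup>2 < \<bar>n\<bar>\<^sup>2" "\<bar>n\<bar>\<^sup>2 < T\<^sup>2"
    using eq assms by (simp_all add: power2_eq_square algebra_simps)
  then have "T - 1 < \<bar>n\<bar>" "\<bar>n\<bar> < T"
    using power_less_imp_less_base[of "T - 1" 2 "\<bar>n\<bar>"] power_less_imp_less_base[of "\<bar>n\<bar>" 2 T] assms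
    by auto
  then show False
    by simp
qed

text \<open>The purely periodic continued fraction with period as is the fixed point of the matrix
  (p, p', q, q') of as, i.e. the root of the form (q, q' - p, - p').\<close>
lemma periodic_cf_wQ:
  assumes pos: "\<forall>a\<in>set as. 1 \<le> a" and "as \<noteq> []" "even (length as)"
  shows "\<exists>Q\<in>Qplus. \<forall>t. cf_digit (wQ Q) t = as ! (t mod length as)"
proof -
  obtain p p' q q' where m: "cf_matrix as = (p, p', q, q')"
    by (cases "cf_matrix as")
  have nonneg: "1 \<le> p" "0 \<le> p'" "0 \<le> q" "0 \<le> q'"
    using cf_matrix_nonneg[OF pos m] by auto
  have "1 \<le> p'" "1 \<le> q"
    using cf_matrix_Cons_pos[of "hd as" "tl as"] pos m \<open>as \<noteq> []\<close> by auto
  have det: "p * q' - p' * q = 1"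
    using cf_matrix_det[OF m] assms(3) by simp
  define F where "F = (q, q' - p, - p')"
  have "3 \<le> p + q'"
  proof -
    have "1 \<le> p' * q"
      using mult_mono[OF \<open>1 \<le> p'\<close> \<open>1 \<le> q\<close>] nonneg(2) by simp
    then have "2 \<le> p * q'"
      using det by simp
    then have "q' \<noteq> 0" "p = 1 \<Longrightarrow> 2 \<le> q'"
      by auto
    then show ?thesis
      using nonneg(1,4) by (cases "p = 1") auto
  qed
  have "disc F = (p + q')\<^sup>2 - 4"
    using det by (simp add: F_def disc_def power2_eq_square algebra_simps)
  moreover have "3\<^sup>2 \<le> (p + q')\<^sup>2"
    using power_mono[OF \<open>3 \<le> p + q'\<close>, of 2] by simp
  ultimately have F: "F \<in> Qplus"
    using square_minus_4_not_square[OF \<open>3 \<le> p + q'\<close>] by (simp add: Qplus_def)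
  define x where "x = wQ F"
  define s where "s = sqrt (of_int (disc F))"
  note r = Qplus_roots[OF F[unfolded F_def], folded F_def s_def]
  have "\<bar>of_int (q' - p)\<bar>\<^sup>2 < s\<^sup>2"
  proof -
    have "0 < 4 * of_int q * (of_int p' :: real)"
      using \<open>1 \<le> p'\<close> \<open>1 \<le> q\<close> by simp
    then show ?thesis
      using r(2) by (simp add: F_def)
  qed
  then have "\<bar>of_int (q' - p)\<bar> < s"
    using r(1) power_less_imp_less_base[of "\<bar>of_int (q' - p)\<bar>" 2 s] by simp
  moreover have "2 * of_int q * x = s - of_int (q' - p)"
    using r(3) by (simp add: x_def F_def)
  ultimately have "0 < of_int q * x"
    by simp
  then have "0 < x"
    using \<open>1 \<le> q\<close> by (simp add: zero_less_mult_iff)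
  have "of_int q * x\<^sup>2 + of_int (q' - p) * x + of_int (- p') = 0"
    using wQ_root[OF F[unfolded F_def]] by (simp add: x_def F_def)
  moreover have "0 < of_int q * x + of_int q'"
    using \<open>0 < x\<close> \<open>1 \<le> q\<close> nonneg by (simp add: add_pos_nonneg)
  ultimately have "x = (of_int p * x + of_int p') / (of_int q * x + of_int q')"
    by (simp add: eq_divide_eq power2_eq_square algebra_simps)
  then have "cf_eval as x = x"
    using cf_eval_cf_matrix[OF pos \<open>0 < x\<close> m] by simp
  then show ?thesis
    using cf_digit_fixed_point[OF pos \<open>as \<noteq> []\<close> \<open>0 < x\<close>] F by (auto simp: x_def)
qed

section \<open>The words of quadratic forms\<close>

lemma valid_preperiod_iff: "valid_preperiod x k \<longleftrightarrow> (\<exists>p>0. is_period (\<lambda>i. cf_digit x (2*k + i)) p)"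
  unfolding valid_preperiod_def is_period_def by (simp add: add.assoc)

lemma Wword_eq_block_word:
  "Wword Q k = block_word (\<lambda>i. cf_digit (wQ Q) (2*k + i)) 0 (least_even_period (\<lambda>i. cf_digit (wQ Q) (2*k + i)))"
  unfolding Wword_def even_period_def min_period_def block_word_def parity_letter_def
    least_even_period_def least_period_def is_period_def
  by (simp add: add.assoc)

lemma periodic_cf_digit_ge_1:
  assumes "x \<notin> \<rat>" "0 < p" "is_period (\<lambda>i. cf_digit x (m + i)) p"
  shows "1 \<le> cf_digit x (m + i)"
proof -
  obtain n where "m + (i + p) = Suc n"
    using assms(2) by (cases "m + (i + p)") auto
  then have "1 \<le> cf_digit x (m + (i + p))"
    using cf_digit_Suc_ge_1[OF assms(1)] by simp
  with assms(3) show ?thesis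
    by (simp add: is_period_def)
qed

theorem Wword_primitive:
  assumes "Q \<in> Qplus" "valid_preperiod (wQ Q) k"
  shows "primitive_word (Wword Q k)"
proof -
  obtain p where "0 < p" "is_period (\<lambda>i. cf_digit (wQ Q) (2*k + i)) p"
    using assms(2) valid_preperiod_iff by blast
  with periodic_cf_digit_ge_1[OF wQ_irrational(1)[OF assms(1)]] show ?thesis
    unfolding Wword_eq_block_word by (intro block_word_primitive) auto
qed

lemma Wword_length_ge_2:
  assumes "Q \<in> Qplus" "valid_preperiod (wQ Q) k"
  shows "2 \<le> length (Wword Q k)"
proof -
  define c where "c = (\<lambda>i. cf_digit (wQ Q) (2*k + i))"
  obtain p where p: "0 < p" "is_period c p"
    using assms(2) valid_preperiod_iff unfolding c_def by blast
  have "2 \<le> least_even_period c"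
    using least_even_period(1,2)[OF p] by (simp add: dvd_imp_le)
  also have "\<dots> \<le> length (block_word c 0 (least_even_period c))"
    using periodic_cf_digit_ge_1[OF wQ_irrational(1)[OF assms(1)] p[unfolded c_def]]
    by (intro length_block_word_ge) (simp add: c_def)
  finally show ?thesis
    by (simp add: Wword_eq_block_word c_def)
qed

lemma block_word_rotate:
  assumes "is_period d P" "even P" "r \<le> P"
  shows "rotate (length (block_word d 0 r)) (block_word d 0 P) = block_word d r P"
proof -
  have "block_word d 0 P = block_word d 0 r @ block_word d r (P - r)"
    using block_word_add[of d 0 r "P - r"] assms(3) by simp
  moreover have "block_word d r P = block_word d r (P - r) @ block_word d (0 + 1 * P) r"
    using block_word_add[of d r "P - r" r] assms(3) by simp
  moreover have "block_word d (0 + 1 * P) r = block_word d 0 r"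
    by (rule block_word_periodic[OF assms(1,2)])
  ultimately show ?thesis
    by (simp add: rotate_append)
qed

lemma block_word_shift_cyc_equiv:
  assumes "is_period d P" "even P" "0 < P" "even e"
  shows "cyc_equiv (block_word d 0 P) (block_word (\<lambda>t. d (t + e)) 0 P)"
proof -
  have "block_word (\<lambda>t. d (t + e)) 0 P = block_word d (e mod P + (e div P) * P) P"
    using block_word_shift[OF assms(4), of d 0 P] by simp
  also have "\<dots> = block_word d (e mod P) P"
    by (rule block_word_periodic[OF assms(1,2)])
  also have "\<dots> = rotate (length (block_word d 0 (e mod P))) (block_word d 0 P)"
    using block_word_rotate[OF assms(1,2)] assms(3) by (simp add: less_imp_le)
  finally show ?thesis
    unfolding cyc_equiv_def by metis
qed

text \<open>Matching tails of the expansions make the digit sequences after the pre-periods shifts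
  of one another, by an even amount since the pre-periods and the period are even.\<close>
lemma Wword_cyc_equiv_of_tails_meet:
  assumes "cf_tails_meet (wQ Q) (wQ Q') True" "valid_preperiod (wQ Q) k" "valid_preperiod (wQ Q') k'"
  shows "cyc_equiv (Wword Q k) (Wword Q' k')"
proof -
  obtain i j where ij: "cf_rem (wQ Q) i = cf_rem (wQ Q') j" "even (i + j)"
    using assms(1) unfolding cf_tails_meet_def by blast
  define c d where "c t = cf_digit (wQ Q) (2*k + t)" and "d t = cf_digit (wQ Q') (2*k' + t)" for t
  obtain p where "0 < p" "is_period c p"
    using assms(2) valid_preperiod_iff unfolding c_def by blast
  obtain q where q: "0 < q" "is_period d q"
    using assms(3) valid_preperiod_iff unfolding d_def by blast
  define P where "P = least_even_period c"
  have P: "0 < P" "even P" "is_period c P"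
    using least_even_period[OF \<open>0 < p\<close> \<open>is_period c p\<close>] by (simp_all add: P_def)
  define M where "M = (i + 2*k') * P"
  have "i + 2*k' \<le> M"
    using P(1) by (simp add: M_def)
  define e where "e = j + 2*k + M - i - 2*k'"
  have "even M"
    using P(2) by (simp add: M_def)
  then have "even e"
    using ij(2) \<open>i + 2*k' \<le> M\<close> by (simp add: e_def)
  have "c t = d (t + e)" for t
  proof -
    have "c t = c (t + M)"
      using is_period_mult[OF P(3), of t "i + 2*k'"] by (simp add: M_def)
    also have "\<dots> = \<lfloor>cf_rem (wQ Q) (2*k + t + M)\<rfloor>"
      by (simp add: c_def cf_digit_def add.assoc)
    also have "2*k + t + M = i + (2*k + t + M - i)"
      using \<open>i + 2*k' \<le> M\<close> by simp
    also have "cf_rem (wQ Q) (i + (2*k + t + M - i)) = cf_rem (wQ Q') (j + (2*k + t + M - i))"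
      by (simp only: cf_rem_add ij(1))
    also have "j + (2*k + t + M - i) = 2*k' + (t + e)"
      using \<open>i + 2*k' \<le> M\<close> by (simp add: e_def)
    finally show ?thesis
      by (simp add: d_def cf_digit_def)
  qed
  then have "c = (\<lambda>t. d (t + e))"
    by blast
  then have "Wword Q k = block_word (\<lambda>t. d (t + e)) 0 (least_even_period d)"
    unfolding Wword_eq_block_word c_def[symmetric] using least_even_period_shift[OF q] by simp
  moreover have "Wword Q' k' = block_word d 0 (least_even_period d)"
    unfolding Wword_eq_block_word d_def ..
  ultimately show ?thesis
    using block_word_shift_cyc_equiv[OF least_even_period(3,2,1)[OF q] \<open>even e\<close>] cyc_equiv_sym
    by simp
qed

lemma least_even_period_of_primitive:
  assumes "is_period c N" "even N" "0 < N" "primitive_word (block_word c 0 N)"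
  shows "least_even_period c = N"
proof -
  define E where "E = least_even_period c"
  have E: "0 < E" "even E" "is_period c E"
    using least_even_period[OF assms(3,1)] by (simp_all add: E_def)
  have "E dvd N"
    using least_even_period_dvd[OF assms(3,1,2)] by (simp add: E_def)
  then obtain r where r: "N = r * E"
    by (metis dvd_def mult.commute)
  then have "block_word c 0 N = concat (replicate r (block_word c 0 E))"
    using block_word_power[OF E(3,2)] by simp
  then have "r < 2"
    using assms(4) unfolding primitive_word_def by (meson not_le)
  moreover have "r \<noteq> 0"
    using r assms(3) by auto
  ultimately show ?thesis
    using r by (simp add: E_def)
qed

lemma primitive_word_single_letter:
  assumes "primitive_word w" "\<forall>y\<in>set w. y = a"
  shows "w = [a]"
proof -
  have w: "w = concat (replicate (length w) [a])"
    using assms(2) by (simp add: replicate_length_same)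
  then have "\<not> 2 \<le> length w"
    using assms(1) unfolding primitive_word_def by blast
  moreover have "0 < length w"
    using assms(1) by (simp add: primitive_word_def)
  ultimately have "length w = 1"
    by linarith
  with w show ?thesis
    by simp
qed

lemma exists_R_before_L:
  assumes "L \<in> set w" "R \<in> set w"
  shows "\<exists>i<length w. w ! i = R \<and> w ! ((i + 1) mod length w) = L"
proof (rule ccontr)
  define n where "n = length w"
  assume "\<not> ?thesis"
  then have step: "w ! ((i + 1) mod n) = R" if "i < n" "w ! i = R" for i
    using that other_parity_letter[of "w ! ((i + 1) mod n)" 0] by (auto simp: n_def parity_letter_def)
  obtain j where j: "j < n" "w ! j = R"
    using assms(2) by (auto simp: n_def in_set_conv_nth)
  have all: "w ! ((j + m) mod n) = R" for m
  proof (induction m)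
    case (Suc m)
    have "(j + Suc m) mod n = ((j + m) mod n + 1) mod n"
      by (simp add: mod_Suc_eq)
    with Suc step[of "(j + m) mod n"] j(1) show ?case
      by simp
  qed (use j in simp)
  obtain i where i: "i < n" "w ! i = L"
    using assms(1) by (auto simp: n_def in_set_conv_nth)
  have "(j + (n - j + i)) mod n = i"
    using i(1) j(1) by simp
  with all[of "n - j + i"] i(2) show False
    by simp
qed

text \<open>Rotate w so that it starts with L and ends with R; it is then the block word of its
  run lengths over an even number of blocks, which is realised as the period of a purely
  periodic continued fraction.\<close>
theorem Wword_surjective:
  assumes w: "primitive_word w" "\<not> cyc_equiv w [L]" "\<not> cyc_equiv w [R]"
  shows "\<exists>Q\<in>Qplus. valid_preperiod (wQ Q) 0 \<and> cyc_equiv (Wword Q 0) w"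
proof -
  have "w \<noteq> []"
    using w(1) by (simp add: primitive_word_def)
  have "L \<in> set w"
  proof (rule ccontr)
    assume "L \<notin> set w"
    then have "\<forall>y\<in>set w. y = R"
      by (metis letter.exhaust)
    then show False
      using primitive_word_single_letter[OF w(1)] w(3) cyc_equiv_refl by metis
  qed
  moreover have "R \<in> set w"
  proof (rule ccontr)
    assume "R \<notin> set w"
    then have "\<forall>y\<in>set w. y = L"
      by (metis letter.exhaust)
    then show False
      using primitive_word_single_letter[OF w(1)] w(2) cyc_equiv_refl by metis
  qed
  ultimately obtain i where i: "i < length w" "w ! i = R" "w ! ((i + 1) mod length w) = L"
    using exists_R_before_L by blast
  define w' where "w' = rotate (i + 1) w"
  have "cyc_equiv w w'"
    unfolding cyc_equiv_def w'_def by blast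
  have "w' \<noteq> []"
    using \<open>w \<noteq> []\<close> by (simp add: w'_def)
  have "hd w' = w ! ((i + 1) mod length w)"
    unfolding w'_def by (rule hd_rotate_conv_nth[OF \<open>w \<noteq> []\<close>])
  with i(3) \<open>w' \<noteq> []\<close> have "w' \<noteq> []" "hd w' = parity_letter 0"
    by (simp_all add: parity_letter_def)
  then obtain N c where N: "1 \<le> N" "\<forall>i. 1 \<le> c i" and w': "w' = block_word c 0 N"
    using word_eq_block_word by blast
  have "last w' = w ! i"
  proof -
    have "i + 1 + (length w - 1) = i + length w"
      using i(1) by simp
    then have "(i + 1 + (length w - 1)) mod length w = i"
      using i(1) by simp
    moreover have "w' ! (length w - 1) = w ! ((i + 1 + (length w - 1)) mod length w)"
      unfolding w'_def by (rule nth_rotate) (use \<open>w \<noteq> []\<close> in simp)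
    ultimately show ?thesis
      using \<open>w' \<noteq> []\<close> by (simp add: last_conv_nth w'_def)
  qed
  then have "parity_letter (N - 1) = R"
    using block_word_last[of c N 0] N i(2) by (simp add: w')
  then have "even N"
    using N(1) by (cases N) (auto simp: parity_letter_def split: if_splits)
  define as where "as = map c [0..<N]"
  have as: "\<forall>a\<in>set as. 1 \<le> a" "as \<noteq> []" "even (length as)"
    using N \<open>even N\<close> by (auto simp: as_def)
  obtain Q where Q: "Q \<in> Qplus" "\<And>t. cf_digit (wQ Q) t = as ! (t mod length as)"
    using periodic_cf_wQ[OF as] by blast
  define d where "d = (\<lambda>t. cf_digit (wQ Q) (2 * 0 + t))"
  have d: "d t = c (t mod N)" for t
    using N(1) by (simp add: d_def Q(2) as_def)
  then have "is_period d N"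
    by (simp add: is_period_def)
  then have "valid_preperiod (wQ Q) 0"
    using N(1) unfolding valid_preperiod_iff d_def by (intro exI[of _ N]) simp
  have "block_word d 0 N = w'"
    unfolding w' by (rule block_word_cong) (simp add: d)
  moreover have "primitive_word w'"
    by (rule primitive_word_cyc_equiv[OF w(1) \<open>cyc_equiv w w'\<close>])
  ultimately have "least_even_period d = N"
    using least_even_period_of_primitive[OF \<open>is_period d N\<close> \<open>even N\<close>] N(1) by simp
  then have "Wword Q 0 = w'"
    using \<open>block_word d 0 N = w'\<close> by (simp add: Wword_eq_block_word d_def)
  then show ?thesis
    using Q(1) \<open>valid_preperiod (wQ Q) 0\<close> cyc_equiv_sym[OF \<open>cyc_equiv w w'\<close>] by auto
qed

theorem lemma2p4:
  shows "(\<forall>Q\<in>Qplus. \<exists>k. valid_preperiod (wQ Q) k)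
    \<and> (\<forall>Q\<in>Qplus. \<forall>k. valid_preperiod (wQ Q) k \<longrightarrow> primitive_word (Wword Q k))
    \<and> (\<forall>Q\<in>Qplus. \<forall>g\<in>SL2Z. \<forall>k k'. valid_preperiod (wQ Q) k \<longrightarrow>
          valid_preperiod (wQ (qact Q g)) k' \<longrightarrow> cyc_equiv (Wword Q k) (Wword (qact Q g) k'))
    \<and> (\<forall>w. (\<exists>Q\<in>Qplus. \<exists>k. valid_preperiod (wQ Q) k \<and> cyc_equiv (Wword Q k) w) \<longleftrightarrow>
          (primitive_word w \<and> \<not> cyc_equiv w [L] \<and> \<not> cyc_equiv w [R]))"
proof -
  have image: "(\<exists>Q\<in>Qplus. \<exists>k. valid_preperiod (wQ Q) k \<and> cyc_equiv (Wword Q k) w) \<longleftrightarrow>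
      (primitive_word w \<and> \<not> cyc_equiv w [L] \<and> \<not> cyc_equiv w [R])" for w
  proof
    assume "\<exists>Q\<in>Qplus. \<exists>k. valid_preperiod (wQ Q) k \<and> cyc_equiv (Wword Q k) w"
    then obtain Q k where Q: "Q \<in> Qplus" "valid_preperiod (wQ Q) k" "cyc_equiv (Wword Q k) w"
      by blast
    have "2 \<le> length w"
      using Wword_length_ge_2[OF Q(1,2)] cyc_equiv_length[OF Q(3)] by simp
    then show "primitive_word w \<and> \<not> cyc_equiv w [L] \<and> \<not> cyc_equiv w [R]"
      using primitive_word_cyc_equiv[OF Wword_primitive[OF Q(1,2)] Q(3)] cyc_equiv_length
      by fastforce
  qed (use Wword_surjective in blast)
  show ?thesis
    using wQ_eventually_periodic Wword_primitive image
      Wword_cyc_equiv_of_tails_meet[OF cf_tails_meet_qact]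
    by blast
qed

end
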